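(* For real $\alpha,\beta$, the inequalities $M_{\alpha }\left( 1,\cos x;\tfrac{2}{3}\right) <\frac{\sin x}{x}<M_{\beta}\left( 1,\cos x;\tfrac{2}{3}\right)$ hold for all $x\in(0,\pi/2)$ if and only if $\alpha \leq 4/5$ and $\beta \geq \frac{\ln 3-\ln 2}{\ln \pi -\ln 2}$.
   Context: For $a,b>0$ and $w\in(0,1)$, the weighted power mean is $M_{r}(a,b;w)=\left( wa^{r}+(1-w) b^{r}\right)^{1/r}$ if $r\neq 0$ and $M_{0}(a,b;w)=a^{w}b^{1-w}$. *)

theory Defs
  imports "HOL-Analysis.Analysis"
begin

definition power_mean :: "real \<Rightarrow> real \<Rightarrow> real \<Rightarrow> real \<Rightarrow> real" where
  "power_mean r a b w =
     (if r = 0 then a powr w * b powr (1 - w)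
      else (w * a powr r + (1 - w) * b powr r) powr (1 / r))"

end

theory Submission
  imports Defs "HOL-Real_Asymp.Real_Asymp"
begin

(* Write s = sin x / x and c = cos x. For r > 0 the inequality M_r(1, c; 2/3) < s is equivalent
   to 3 s^r - c^r > 2, and 3 s^r - c^r tends to 2 as x -> 0. For r = 1 - 1/m the sign of its
   derivative is decided, after raising to the m-th power, by an inequality between sin x, cos x and
   sin x - x cos x; alternating Taylor bounds turn it into a polynomial inequality in x^2, certified
   by exact bisection. Thus 3 s^(4/5) - c^(4/5) increases on (0, pi/2) and 3 s^(8/9) - c^(8/9)
   decreases on (0, 1.33]; an interval subdivision covers [1.33, 1.44], and on [1.44, pi/2) a
   rescaled combination increases to its value at pi/2. Monotonicity of M_r in r then gives the
   sufficiency for all alpha <= 4/5 and beta >= p, since 8/9 <= p. Sharpness comes from the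
   expansion M_r(1, cos x; 2/3) - s ~ (r - 4/5) x^4 / 36 at 0 and from the limit at pi/2, where
   s < M_r forces 2/pi <= (2/3)^(1/r), i.e. r >= p = (ln 3 - ln 2) / (ln pi - ln 2). *)

section \<open>Weighted power means\<close>

lemma power_mean_nonzero:
  "r \<noteq> 0 \<Longrightarrow> power_mean r a b w = (w * a powr r + (1 - w) * b powr r) powr (1 / r)"
  by (simp add: power_mean_def)

lemma weighted_powr_sum_pos:
  fixes a b w r :: real
  assumes "0 < a" "0 < b" "0 \<le> w" "w \<le> 1"
  shows "0 < w * a powr r + (1 - w) * b powr r"
proof (cases "w = 0")
  case False
  then show ?thesis using assms by (intro add_pos_nonneg) auto
qed (use assms in simp)

lemma power_mean_pos:
  assumes "0 < a" "0 < b" "0 \<le> w" "w \<le> 1"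
  shows "0 < power_mean r a b w"
  using weighted_powr_sum_pos[OF assms, of r] assms by (simp add: power_mean_def)

lemma power_mean_reciprocal:
  assumes "0 < a" "0 < b"
  shows "power_mean r a b w = 1 / power_mean (- r) (1 / a) (1 / b) w"
proof -
  have inv: "(1 / x) powr t = x powr (- t)" if "0 < x" for x t :: real
    using that by (simp add: powr_minus_divide powr_divide)
  show ?thesis
    using assms powr_minus_divide[of b "w - 1"]
    by (simp add: power_mean_def inv powr_minus_divide flip: powr_mult)
qed

lemma power_mean_mono_pos:
  assumes "0 < a" "0 < b" "0 \<le> w" "w \<le> 1" "0 < r" "r \<le> s"
  shows "power_mean r a b w \<le> power_mean s a b w"
proof -
  define A where "A = w * a powr r + (1 - w) * b powr r"
  have "0 < A"
    unfolding A_def using assms by (intro weighted_powr_sum_pos)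
  have "A powr (s / r) \<le> w * (a powr r) powr (s / r) + (1 - w) * (b powr r) powr (s / r)"
    using convex_onD[OF powr_convex, of "s / r" "1 - w" "a powr r" "b powr r"] assms
    by (simp add: A_def algebra_simps)
  also have "\<dots> = w * a powr s + (1 - w) * b powr s"
    using assms by (simp add: powr_powr)
  finally have "(A powr (s / r)) powr (1 / s) \<le> (w * a powr s + (1 - w) * b powr s) powr (1 / s)"
    using assms by (intro powr_mono2) auto
  then show ?thesis
    using assms \<open>0 < A\<close> by (simp add: power_mean_nonzero A_def powr_powr)
qed

lemma power_mean_zero_le:
  assumes "0 < a" "0 < b" "0 \<le> w" "w \<le> 1" "0 \<le> r"
  shows "power_mean 0 a b w \<le> power_mean r a b w"
proof (cases "r = 0")
  case False
  have "(a powr r) powr w * (b powr r) powr (1 - w) \<le> w * a powr r + (1 - w) * b powr r"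
    using assms by (intro Youngs_inequality_0) auto
  then have "((a powr r) powr w * (b powr r) powr (1 - w)) powr (1 / r)
      \<le> (w * a powr r + (1 - w) * b powr r) powr (1 / r)"
    using assms False by (intro powr_mono2) auto
  then show ?thesis
    using assms False by (simp add: power_mean_def powr_mult powr_powr)
qed simp

lemma power_mean_mono:
  assumes "0 < a" "0 < b" "0 \<le> w" "w \<le> 1" "r \<le> s"
  shows "power_mean r a b w \<le> power_mean s a b w"
proof -
  have nonneg: "power_mean r a b w \<le> power_mean s a b w"
    if "0 < a" "0 < b" "0 \<le> r" "r \<le> s" for a b r s
  proof (cases "r = 0")
    case True
    then show ?thesis using that assms power_mean_zero_le by simp
  next
    case False
    with that assms show ?thesis by (simp add: power_mean_mono_pos)
  qed
  have nonpos: "power_mean r a b w \<le> power_mean s a b w" if "r \<le> s" "s \<le> 0" for r s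
  proof -
    have "power_mean (- s) (1 / a) (1 / b) w \<le> power_mean (- r) (1 / a) (1 / b) w"
      using that assms by (intro nonneg) auto
    moreover have "0 < power_mean (- s) (1 / a) (1 / b) w"
      using assms by (simp add: power_mean_pos)
    ultimately show ?thesis
      unfolding power_mean_reciprocal[OF assms(1,2), of r] power_mean_reciprocal[OF assms(1,2), of s]
      by (intro frac_le) auto
  qed
  consider "0 \<le> r" | "s \<le> 0" | "r < 0" "0 < s" by linarith
  then show ?thesis
  proof cases
    case 1
    then show ?thesis using nonneg assms by blast
  next
    case 2
    then show ?thesis using nonpos assms by blast
  next
    case 3
    then have "power_mean r a b w \<le> power_mean 0 a b w" by (intro nonpos) auto
    also have "\<dots> \<le> power_mean s a b w" using 3 assms by (intro nonneg) auto
    finally show ?thesis .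
  qed
qed

section \<open>Positivity certificates for integer polynomials\<close>

fun ipoly :: "int list \<Rightarrow> real \<Rightarrow> real" where
  "ipoly [] x = 0"
| "ipoly (c # cs) x = of_int c + x * ipoly cs x"

fun ipoly_add :: "int list \<Rightarrow> int list \<Rightarrow> int list" where
  "ipoly_add [] ds = ds"
| "ipoly_add cs [] = cs"
| "ipoly_add (c # cs) (d # ds) = (c + d) # ipoly_add cs ds"

fun ipoly_mult :: "int list \<Rightarrow> int list \<Rightarrow> int list" where
  "ipoly_mult [] ds = []"
| "ipoly_mult (c # cs) ds = ipoly_add (map ((*) c) ds) (0 # ipoly_mult cs ds)"

fun ipoly_power :: "int list \<Rightarrow> nat \<Rightarrow> int list" where
  "ipoly_power cs 0 = [1]"
| "ipoly_power cs (Suc n) = ipoly_mult cs (ipoly_power cs n)"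

fun ipoly_rescale :: "int \<Rightarrow> int \<Rightarrow> int list \<Rightarrow> int list" where
  "ipoly_rescale a b [] = []"
| "ipoly_rescale a b (c # cs) = (b ^ Suc (length cs) * c) # map ((*) a) (ipoly_rescale a b cs)"

fun ipoly_shift :: "int \<Rightarrow> int list \<Rightarrow> int list" where
  "ipoly_shift k [] = []"
| "ipoly_shift k (c # cs) =
     (let r = ipoly_shift k cs in ipoly_add [c] (ipoly_add (map ((*) k) r) (0 # r)))"

definition neg_coeff_sum :: "int list \<Rightarrow> int" where
  "neg_coeff_sum cs = sum_list (map (\<lambda>c. max 0 (- c)) cs)"

fun pos_cert :: "nat \<Rightarrow> int list \<Rightarrow> bool" where
  "pos_cert n [] = False"
| "pos_cert n (c # cs) = (neg_coeff_sum cs < c \<or> (c = 0 \<and> pos_cert n cs) \<or>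
     (case n of 0 \<Rightarrow> False
      | Suc m \<Rightarrow> pos_cert m (ipoly_rescale 1 2 (c # cs))
                \<and> pos_cert m (ipoly_shift 1 (ipoly_rescale 1 2 (c # cs)))))"

declare pos_cert.simps [simp del]

lemma ipoly_add [simp]: "ipoly (ipoly_add p q) x = ipoly p x + ipoly q x"
  by (induction p q rule: ipoly_add.induct) (auto simp: algebra_simps)

lemma ipoly_map_mult [simp]: "ipoly (map ((*) a) p) x = of_int a * ipoly p x"
  by (induction p) (auto simp: algebra_simps)

lemma ipoly_mult [simp]: "ipoly (ipoly_mult p q) x = ipoly p x * ipoly q x"
  by (induction p) (auto simp: algebra_simps)

lemma ipoly_power [simp]: "ipoly (ipoly_power p n) x = ipoly p x ^ n"
  by (induction n) auto

lemma ipoly_rescale: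
  "b \<noteq> 0 \<Longrightarrow> ipoly (ipoly_rescale a b p) t = of_int b ^ length p * ipoly p (of_int a * t / of_int b)"
  by (induction p) (auto simp: algebra_simps)

lemma ipoly_shift: "ipoly (ipoly_shift k p) t = ipoly p (of_int k + t)"
  by (induction p) (auto simp: Let_def algebra_simps)

lemma neg_coeff_sum_nonneg: "0 \<le> neg_coeff_sum p"
  unfolding neg_coeff_sum_def by (induction p) auto

lemma ipoly_tail_ge_neg_coeff_sum:
  assumes "0 \<le> t" "t \<le> 1"
  shows "- of_int (neg_coeff_sum p) \<le> t * ipoly p t"
  using assms
proof (induction p)
  case (Cons c cs)
  have "- of_int (neg_coeff_sum cs) \<le> t * ipoly cs t"
    using Cons by blast
  moreover have "- of_int (max 0 (- c)) \<le> (of_int c :: real)"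
    by (auto simp: max_def)
  ultimately have "- of_int (neg_coeff_sum (c # cs)) \<le> ipoly (c # cs) t"
    by (simp add: neg_coeff_sum_def)
  moreover have "- of_int (neg_coeff_sum (c # cs)) \<le> t * (- of_int (neg_coeff_sum (c # cs)))"
    using Cons.prems neg_coeff_sum_nonneg[of "c # cs"] by (simp add: mult_left_le_one_le)
  ultimately show ?case
    using Cons.prems by (smt (verit) mult_left_mono)
qed (simp add: neg_coeff_sum_def)

lemma pos_cert_sound:
  assumes "pos_cert n p" "0 < t" "t \<le> 1"
  shows "0 < ipoly p t"
  using assms
proof (induction n p arbitrary: t rule: pos_cert.induct)
  case (1 n)
  then show ?case by (simp add: pos_cert.simps)
next
  case (2 n c cs)
  let ?h = "ipoly_rescale 1 2 (c # cs)"
  have halve: "ipoly ?h s = 2 ^ Suc (length cs) * ipoly (c # cs) (s / 2)" for s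
    using ipoly_rescale[of 2 1 "c # cs" s] by (simp del: ipoly.simps ipoly_rescale.simps)
  consider "neg_coeff_sum cs < c" | "c = 0" "pos_cert n cs"
    | m where "n = Suc m" "pos_cert m ?h" "pos_cert m (ipoly_shift 1 ?h)"
    using "2.prems"(1) by (auto simp: pos_cert.simps(2)[of n c cs] split: nat.splits)
  then show ?case
  proof cases
    case 1
    then show ?thesis
      using ipoly_tail_ge_neg_coeff_sum[of t cs] "2.prems" by simp
  next
    case 2
    then show ?thesis using "2.IH"(1) "2.prems" by simp
  next
    case 3
    show ?thesis
    proof (cases "t \<le> 1/2")
      case True
      have "0 < ipoly ?h (2 * t)"
        using "2.IH"(2)[OF 3(1,2)] "2.prems" True by simp
      then show ?thesis by (simp add: halve zero_less_mult_iff del: ipoly.simps ipoly_rescale.simps)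
    next
      case False
      have "0 < ipoly (ipoly_shift 1 ?h) (2 * t - 1)"
        using "2.IH"(3)[OF 3(1,3)] "2.prems" False by simp
      then show ?thesis
        by (simp add: ipoly_shift halve zero_less_mult_iff
            del: ipoly.simps ipoly_rescale.simps ipoly_shift.simps)
    qed
  qed
qed

lemma pos_cert_interval:
  assumes "pos_cert n (ipoly_rescale m 1 (ipoly_shift k (ipoly_rescale 1 N p)))" "0 < m" "0 < N"
    and "of_int k / of_int N < y" "y \<le> of_int (k + m) / of_int N"
  shows "0 < ipoly p y"
proof -
  define t where "t = (of_int N * y - of_int k) / of_int m"
  have "0 < t" "t \<le> 1"
    using assms by (auto simp: t_def field_simps)
  then have "0 < ipoly (ipoly_rescale m 1 (ipoly_shift k (ipoly_rescale 1 N p))) t"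
    using pos_cert_sound[OF assms(1)] by blast
  also have "\<dots> = ipoly (ipoly_rescale 1 N p) (of_int k + of_int m * t)"
    by (simp add: ipoly_rescale ipoly_shift del: ipoly_rescale.simps)
  also have "of_int k + of_int m * t = of_int N * y"
    using assms by (simp add: t_def)
  also have "ipoly (ipoly_rescale 1 N p) (of_int N * y) = of_int N ^ length p * ipoly p y"
    using assms by (simp add: ipoly_rescale del: ipoly_rescale.simps)
  finally show ?thesis
    using assms by (simp add: zero_less_mult_iff)
qed

section \<open>Alternating Taylor bounds for sine and cosine\<close>

definition sin_taylor :: "nat \<Rightarrow> real \<Rightarrow> real" where
  "sin_taylor n x = (\<Sum>k<n. (-1) ^ k * x ^ (2 * k + 1) / fact (2 * k + 1))"

definition cos_taylor :: "nat \<Rightarrow> real \<Rightarrow> real" where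
  "cos_taylor n x = (\<Sum>k<n. (-1) ^ k * x ^ (2 * k) / fact (2 * k))"

lemma has_real_derivative_power_over_fact:
  "((\<lambda>x. c * x ^ Suc n / fact (Suc n)) has_real_derivative c * x ^ n / fact n) (at x)"
proof -
  have "((\<lambda>x. c * x ^ Suc n / fact (Suc n)) has_real_derivative
      c * (real (Suc n) * x ^ n) / fact (Suc n)) (at x)"
    by (intro DERIV_cdivide DERIV_cmult) (use DERIV_pow[of "Suc n" x] in simp)
  then show ?thesis
    by (simp del: of_nat_Suc)
qed

lemma has_real_derivative_sin_taylor: "(sin_taylor n has_real_derivative cos_taylor n x) (at x)"
  unfolding sin_taylor_def [abs_def] cos_taylor_def
  by (intro DERIV_sum) (use has_real_derivative_power_over_fact[of _ "2 * _"] in simp)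

lemma cos_taylor_Suc:
  "cos_taylor (Suc n) x = 1 - (\<Sum>k<n. (-1) ^ k * x ^ (2 * k + 2) / fact (2 * k + 2))"
  unfolding cos_taylor_def sum.lessThan_Suc_shift by (simp add: sum_negf)

lemma has_real_derivative_cos_taylor_Suc:
  "(cos_taylor (Suc n) has_real_derivative - sin_taylor n x) (at x)"
proof -
  have "((\<lambda>x. \<Sum>k<n. (-1) ^ k * x ^ (2 * k + 2) / fact (2 * k + 2))
      has_real_derivative sin_taylor n x) (at x)"
    unfolding sin_taylor_def
    by (intro DERIV_sum) (use has_real_derivative_power_over_fact[of _ "2 * _ + 1"] in simp)
  from DERIV_diff[OF DERIV_const this] show ?thesis
    unfolding cos_taylor_Suc [abs_def] by simp
qed

lemma sin_taylor_zero [simp]: "sin_taylor n 0 = 0"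
  by (simp add: sin_taylor_def)

lemma cos_taylor_Suc_zero [simp]: "cos_taylor (Suc n) 0 = 1"
  by (simp add: cos_taylor_Suc)

lemma nonneg_if_deriv_nonneg:
  fixes f f' :: "real \<Rightarrow> real"
  assumes "f 0 = 0" "\<And>t. (f has_real_derivative f' t) (at t)"
    and "\<And>t. 0 \<le> t \<Longrightarrow> 0 \<le> f' t" "0 \<le> x"
  shows "0 \<le> f x"
  using DERIV_nonneg_imp_nondecreasing[of 0 x f] assms by auto

lemma sin_cos_taylor_alternating:
  assumes "0 \<le> x" "0 < n"
  shows "0 \<le> (-1) ^ n * (sin x - sin_taylor n x)"
    and "0 \<le> (-1) ^ n * (cos x - cos_taylor n x)"
proof -
  have sin_step: "0 \<le> (-1) ^ n * (sin x - sin_taylor n x)"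
    if "\<And>t. 0 \<le> t \<Longrightarrow> 0 \<le> (-1) ^ n * (cos t - cos_taylor n t)" "0 \<le> x" for n x
    by (rule nonneg_if_deriv_nonneg[OF _ _ that])
      (auto intro!: derivative_eq_intros has_real_derivative_sin_taylor)
  have cos_step: "0 \<le> (-1) ^ Suc n * (cos x - cos_taylor (Suc n) x)"
    if "\<And>t. 0 \<le> t \<Longrightarrow> 0 \<le> (-1) ^ n * (sin t - sin_taylor n t)" "0 \<le> x" for n x
    by (rule nonneg_if_deriv_nonneg[OF _ _ that])
      (auto intro!: derivative_eq_intros has_real_derivative_cos_taylor_Suc simp: algebra_simps)
  have "(\<forall>x\<ge>0. 0 \<le> (-1) ^ Suc m * (sin x - sin_taylor (Suc m) x)) \<and>
        (\<forall>x\<ge>0. 0 \<le> (-1) ^ Suc m * (cos x - cos_taylor (Suc m) x))" for m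
  proof (induction m)
    case 0
    have "0 \<le> (-1) ^ Suc 0 * (cos x - cos_taylor (Suc 0) x)" for x
      by (simp add: cos_taylor_def)
    then show ?case using sin_step by blast
  next
    case (Suc m)
    then show ?case using sin_step cos_step by blast
  qed
  then show "0 \<le> (-1) ^ n * (sin x - sin_taylor n x)" "0 \<le> (-1) ^ n * (cos x - cos_taylor n x)"
    using assms gr0_implies_Suc[of n] by auto
qed

lemma sin_minus_x_cos_taylor_alternating:
  assumes "0 \<le> x" "0 < n"
  shows "0 \<le> (-1) ^ n * (sin x - x * cos x - (sin_taylor (Suc n) x - x * cos_taylor (Suc n) x))"
proof -
  let ?f = "\<lambda>x. (-1) ^ n * (sin x - x * cos x - (sin_taylor (Suc n) x - x * cos_taylor (Suc n) x))"
  have "0 \<le> ?f x"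
  proof (rule nonneg_if_deriv_nonneg[where f = ?f])
    show "(?f has_real_derivative t * ((-1) ^ n * (sin t - sin_taylor n t))) (at t)" for t
      by (auto intro!: derivative_eq_intros has_real_derivative_sin_taylor
          has_real_derivative_cos_taylor_Suc simp: algebra_simps)
    show "0 \<le> t * ((-1) ^ n * (sin t - sin_taylor n t))" if "0 \<le> t" for t
      using sin_cos_taylor_alternating(1)[OF that assms(2)] that by simp
  qed (use assms in simp_all)
  then show ?thesis by simp
qed

lemma sin_ge_taylor_7:
  "0 \<le> x \<Longrightarrow> x * ipoly [5040, -840, 42, -1] (x\<^sup>2) / 5040 \<le> sin x"
  using sin_cos_taylor_alternating(1)[of x 4]
  by (simp add: sin_taylor_def eval_nat_numeral field_simps)

lemma sin_le_taylor_5: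
  "0 \<le> x \<Longrightarrow> sin x \<le> x * ipoly [120, -20, 1] (x\<^sup>2) / 120"
  using sin_cos_taylor_alternating(1)[of x 3]
  by (simp add: sin_taylor_def eval_nat_numeral field_simps)

lemma cos_le_taylor_8:
  "0 \<le> x \<Longrightarrow> cos x \<le> ipoly [40320, -20160, 1680, -56, 1] (x\<^sup>2) / 40320"
  using sin_cos_taylor_alternating(2)[of x 5]
  by (simp add: cos_taylor_def eval_nat_numeral field_simps)

lemma cos_ge_taylor_6:
  "0 \<le> x \<Longrightarrow> ipoly [720, -360, 30, -1] (x\<^sup>2) / 720 \<le> cos x"
  using sin_cos_taylor_alternating(2)[of x 4]
  by (simp add: cos_taylor_def eval_nat_numeral field_simps)

lemma sin_minus_x_cos_le_taylor_7:
  "0 \<le> x \<Longrightarrow> sin x - x * cos x \<le> x ^ 3 * ipoly [280, -28, 1] (x\<^sup>2) / 840"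
  using sin_minus_x_cos_taylor_alternating[of x 3]
  by (simp add: sin_taylor_def cos_taylor_def eval_nat_numeral field_simps)

lemma sin_minus_x_cos_ge_taylor_9:
  "0 \<le> x \<Longrightarrow> x ^ 3 * ipoly [15120, -1512, 54, -1] (x\<^sup>2) / 45360 \<le> sin x - x * cos x"
  using sin_minus_x_cos_taylor_alternating[of x 4]
  by (simp add: sin_taylor_def cos_taylor_def eval_nat_numeral field_simps)

section \<open>Certified polynomial inequalities\<close>

text \<open>In the variable \<open>y = x\<^sup>2\<close>, these are the Taylor-polynomial forms of the derivative sign
  conditions below; each certificate is checked by evaluation.\<close>

lemma ipoly_sin_taylor_7_pos:
  assumes "0 < y" "y \<le> 121/49"
  shows "0 < ipoly [5040, -840, 42, -1] y"
proof (rule pos_cert_interval[where n = 30 and m = 121 and k = 0 and N = 49])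
  show "pos_cert 30 (ipoly_rescale 121 1 (ipoly_shift 0 (ipoly_rescale 1 49 [5040, -840, 42, -1])))"
    by code_simp
qed (use assms in auto)

lemma ipoly_sin_minus_x_cos_taylor_9_pos:
  assumes "0 < y" "y \<le> 121/49"
  shows "0 < ipoly [15120, -1512, 54, -1] y"
proof (rule pos_cert_interval[where n = 30 and m = 121 and k = 0 and N = 49])
  show "pos_cert 30 (ipoly_rescale 121 1 (ipoly_shift 0 (ipoly_rescale 1 49 [15120, -1512, 54, -1])))"
    by code_simp
qed (use assms in auto)

lemma ipoly_cos_taylor_6_pos:
  assumes "0 < y" "y \<le> 17689/10000"
  shows "0 < ipoly [720, -360, 30, -1] y"
proof (rule pos_cert_interval[where n = 30 and m = 17689 and k = 0 and N = 10000])
  show "pos_cert 30 (ipoly_rescale 17689 1 (ipoly_shift 0 (ipoly_rescale 1 10000 [720, -360, 30, -1])))"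
    by code_simp
qed (use assms in auto)

lemma lower_key_ipoly_ineq:
  assumes "0 < y" "y \<le> 121/49"
  shows "243 * 5040 ^ 6 * (ipoly [40320, -20160, 1680, -56, 1] y * ipoly [280, -28, 1] y ^ 5)
    < 40320 * 840 ^ 5 * ipoly [5040, -840, 42, -1] y ^ 6"
proof -
  let ?p = "ipoly_add (map ((*) (40320 * 840 ^ 5)) (ipoly_power [5040, -840, 42, -1] 6))
    (map ((*) (- 243 * 5040 ^ 6))
      (ipoly_mult [40320, -20160, 1680, -56, 1] (ipoly_power [280, -28, 1] 5)))"
  have "0 < ipoly ?p y"
  proof (rule pos_cert_interval[where n = 30 and m = 121 and k = 0 and N = 49])
    show "pos_cert 30 (ipoly_rescale 121 1 (ipoly_shift 0 (ipoly_rescale 1 49 ?p)))"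
      by code_simp
  qed (use assms in auto)
  then show ?thesis
    by (simp only: ipoly_add ipoly_map_mult ipoly_mult ipoly_power) simp
qed

lemma upper_small_key_ipoly_ineq:
  assumes "0 < y" "y \<le> 17689/10000"
  shows "720 * 45360 ^ 9 * ipoly [120, -20, 1] y ^ 10
    < 3 ^ 9 * 120 ^ 10 * (ipoly [720, -360, 30, -1] y * ipoly [15120, -1512, 54, -1] y ^ 9)"
proof -
  let ?p = "ipoly_add (map ((*) (3 ^ 9 * 120 ^ 10))
      (ipoly_mult [720, -360, 30, -1] (ipoly_power [15120, -1512, 54, -1] 9)))
    (map ((*) (- 720 * 45360 ^ 9)) (ipoly_power [120, -20, 1] 10))"
  have "0 < ipoly ?p y"
  proof (rule pos_cert_interval[where n = 30 and m = 17689 and k = 0 and N = 10000])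
    show "pos_cert 30 (ipoly_rescale 17689 1 (ipoly_shift 0 (ipoly_rescale 1 10000 ?p)))"
      by code_simp
  qed (use assms in auto)
  then show ?thesis
    by (simp only: ipoly_add ipoly_map_mult ipoly_mult ipoly_power) simp
qed

lemma upper_large_key_ipoly_ineq:
  assumes "10143/4900 < y" "y \<le> 121/49"
  shows "60000 * 5040 ^ 11 * (ipoly [40320, -20160, 1680, -56, 1] y * ipoly [280, -28, 1] y ^ 10)
    < 40320 * 840 ^ 10 * ipoly [5040, -840, 42, -1] y ^ 11"
proof -
  let ?p = "ipoly_add (map ((*) (40320 * 840 ^ 10)) (ipoly_power [5040, -840, 42, -1] 11))
    (map ((*) (- 60000 * 5040 ^ 11))
      (ipoly_mult [40320, -20160, 1680, -56, 1] (ipoly_power [280, -28, 1] 10)))"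
  have "0 < ipoly ?p y"
  proof (rule pos_cert_interval[where n = 30 and m = 1957 and k = 10143 and N = 4900])
    show "pos_cert 30 (ipoly_rescale 1957 1 (ipoly_shift 10143 (ipoly_rescale 1 4900 ?p)))"
      by code_simp
  qed (use assms in auto)
  then show ?thesis
    by (simp only: ipoly_add ipoly_map_mult ipoly_mult ipoly_power) simp
qed

section \<open>Monotonicity of \<open>a (sin x / x) ^ r - cos x ^ r\<close>\<close>

lemma pi_bounds: "157/50 < pi" "pi < 22/7"
  using pi_approx by simp_all

lemma sin_cos_pos:
  assumes "0 < x" "x < pi/2"
  shows "0 < sin x" "0 < cos x" "0 < sin x / x"
  using assms sin_gt_zero2[of x] cos_gt_zero[of x] by auto

lemma x_cos_less_sin:
  assumes "0 < x" "x < pi"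
  shows "x * cos x < sin x"
proof -
  have "(\<lambda>t. sin t - t * cos t) 0 < (\<lambda>t. sin t - t * cos t) x"
  proof (rule DERIV_pos_imp_increasing_open[OF assms(1)])
    fix t assume "0 < t" "t < x"
    then have "0 < t * sin t" using assms by (simp add: sin_gt_zero)
    moreover have "((\<lambda>t. sin t - t * cos t) has_real_derivative t * sin t) (at t)"
      by (auto intro!: derivative_eq_intros)
    ultimately show "\<exists>y. ((\<lambda>t. sin t - t * cos t) has_real_derivative y) (at t) \<and> 0 < y"
      by blast
  qed (intro continuous_intros)
  then show ?thesis by simp
qed

lemma sinc_antimono:
  assumes "0 < a" "a \<le> x" "x < pi"
  shows "sin x / x \<le> sin a / a"
proof (rule DERIV_nonpos_imp_nonincreasing[OF assms(2)])
  fix t assume "a \<le> t" "t \<le> x"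
  then have t: "0 < t" "t < pi" using assms by auto
  have "((\<lambda>t. sin t / t) has_real_derivative - (sin t - t * cos t) / t\<^sup>2) (at t)"
    using t by (auto intro!: derivative_eq_intros simp: field_simps power2_eq_square)
  moreover have "- (sin t - t * cos t) / t\<^sup>2 \<le> 0"
    using x_cos_less_sin[OF t] by (simp add: divide_nonpos_nonneg)
  ultimately show "\<exists>y. ((\<lambda>t. sin t / t) has_real_derivative y) (at t) \<and> y \<le> 0"
    by blast
qed

lemma sinc_tendsto_one: "((\<lambda>x. sin x / x :: real) \<longlongrightarrow> 1) (at_right 0)"
proof -
  have "((\<lambda>x. sin x / x :: real) \<longlongrightarrow> 1) (at 0)"
    using DERIV_sin[of 0] by (auto simp: has_field_derivative_def field_has_derivative_at)
  then show ?thesis by (simp add: filterlim_at_split)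
qed

lemma less_tendsto_at_right_if_deriv_pos:
  fixes g :: "real \<Rightarrow> real"
  assumes lim: "(g \<longlongrightarrow> L) (at_right a)" and "a < x"
    and deriv: "\<And>t. a < t \<Longrightarrow> t \<le> x \<Longrightarrow> \<exists>y. (g has_real_derivative y) (at t) \<and> 0 < y"
  shows "L < g x"
proof -
  define c where "c = (a + x) / 2"
  have "a < c" "c < x" using \<open>a < x\<close> by (auto simp: c_def)
  have "g e < g c" if "a < e" "e < c" for e
    by (rule DERIV_pos_imp_increasing[OF that(2)]) (use that \<open>c < x\<close> in \<open>auto intro!: deriv\<close>)
  then have "eventually (\<lambda>e. g e \<le> g c) (at_right a)"
    unfolding eventually_at_right_field using \<open>a < c\<close> by (auto intro!: exI[of _ c] less_imp_le)
  then have "L \<le> g c"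
    by (intro tendsto_upperbound[OF lim]) auto
  also have "g c < g x"
    by (rule DERIV_pos_imp_increasing[OF \<open>c < x\<close>]) (use \<open>a < c\<close> in \<open>auto intro!: deriv\<close>)
  finally show ?thesis .
qed

lemma powr_neg_root_diff_pos_iff:
  fixes c s X Y :: real and m :: nat
  assumes "0 < c" "0 < s" "0 \<le> X" "0 \<le> Y" "0 < m"
  shows "0 < c powr (- 1 / m) * X - s powr (- 1 / m) * Y \<longleftrightarrow> Y ^ m * c < X ^ m * s"
proof -
  have root: "(z powr (- 1 / m) * Z) ^ m = Z ^ m / z" if "0 < z" for z Z :: real
    using that assms by (simp add: power_mult_distrib powr_minus_divide power_divide powr_power)
  have mono: "u < v \<longleftrightarrow> u ^ m < v ^ m" if "0 \<le> u" "0 \<le> v" for u v :: real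
    using that assms power_strict_mono[of u v m] power_less_imp_less_base[of u m v] by auto
  have "0 < c powr (- 1 / m) * X - s powr (- 1 / m) * Y
      \<longleftrightarrow> s powr (- 1 / m) * Y < c powr (- 1 / m) * X"
    by auto
  also have "\<dots> \<longleftrightarrow> (s powr (- 1 / m) * Y) ^ m < (c powr (- 1 / m) * X) ^ m"
    by (rule mono) (use assms in auto)
  also have "\<dots> \<longleftrightarrow> Y ^ m / s < X ^ m / c"
    by (simp only: root assms)
  also have "\<dots> \<longleftrightarrow> Y ^ m * c < X ^ m * s"
    using assms by (simp add: field_simps)
  finally show ?thesis .
qed

text \<open>For \<open>r > 0\<close>, \<open>power_mean r 1 (cos x) (2/3) < sin x / x\<close> iff \<open>2 < sinc_cos_diff 3 r x\<close>.\<close>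

definition sinc_cos_diff :: "real \<Rightarrow> real \<Rightarrow> real \<Rightarrow> real" where
  "sinc_cos_diff a r x = a * (sin x / x) powr r - cos x powr r"

lemma has_real_derivative_sinc_cos_diff:
  assumes "0 < t" "t < pi/2"
  shows "(sinc_cos_diff a r has_real_derivative
    r * (cos t powr (r - 1) * sin t - (sin t / t) powr (r - 1) * (a * (sin t - t * cos t) / t\<^sup>2)))
    (at t)"
  unfolding sinc_cos_diff_def [abs_def]
  using assms sin_cos_pos[OF assms]
  by (auto intro!: derivative_eq_intros simp: field_simps power2_eq_square)

text \<open>With \<open>r = 1 - 1/m\<close>, raising both terms of the derivative to the \<open>m\<close>-th power removes
  the fractional exponents.\<close>

lemma sinc_cos_diff_deriv_sign:
  fixes m :: nat
  assumes "0 < t" "t < pi/2" "0 < a" "1 < m"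
  shows "a ^ m * (sin t - t * cos t) ^ m * cos t < (sin t * t\<^sup>2) ^ m * (sin t / t) \<Longrightarrow>
      \<exists>y. (sinc_cos_diff a (1 - 1 / m) has_real_derivative y) (at t) \<and> 0 < y"
    and "(sin t * t\<^sup>2) ^ m * (sin t / t) < a ^ m * (sin t - t * cos t) ^ m * cos t \<Longrightarrow>
      \<exists>y. (sinc_cos_diff a (1 - 1 / m) has_real_derivative y) (at t) \<and> y < 0"
proof -
  define X where "X = sin t"
  define Y where "Y = a * (sin t - t * cos t) / t\<^sup>2"
  have pos: "0 < cos t" "0 < sin t / t" "0 \<le> X" "0 \<le> Y" "0 < 1 - 1 / real m"
    using sin_cos_pos[OF assms(1,2)] x_cos_less_sin[of t] assms by (auto simp: X_def Y_def)
  have P: "a ^ m * (sin t - t * cos t) ^ m * cos t = Y ^ m * cos t * (t\<^sup>2) ^ m"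
    and Q: "(sin t * t\<^sup>2) ^ m * (sin t / t) = X ^ m * (sin t / t) * (t\<^sup>2) ^ m"
    using assms by (simp_all add: X_def Y_def power_mult_distrib power_divide)
  have "0 < (t\<^sup>2) ^ m" using assms by simp
  note cancel = mult_less_cancel_right_pos[OF this]
  have "1 - 1 / real m - 1 = - 1 / real m" by simp
  then have deriv: "(sinc_cos_diff a (1 - 1 / m) has_real_derivative
      (1 - 1 / m) * (cos t powr (- 1 / m) * X - (sin t / t) powr (- 1 / m) * Y)) (at t)"
    using has_real_derivative_sinc_cos_diff[OF assms(1,2), of a "1 - 1 / m"]
    unfolding X_def Y_def by argo
  show "\<exists>y. (sinc_cos_diff a (1 - 1 / m) has_real_derivative y) (at t) \<and> 0 < y"
    if "a ^ m * (sin t - t * cos t) ^ m * cos t < (sin t * t\<^sup>2) ^ m * (sin t / t)"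
  proof -
    have "Y ^ m * cos t < X ^ m * (sin t / t)"
      using that unfolding P Q cancel .
    then have "0 < cos t powr (- 1 / m) * X - (sin t / t) powr (- 1 / m) * Y"
      using powr_neg_root_diff_pos_iff[of "cos t" "sin t / t" X Y m] pos assms by simp
    then show ?thesis
      using deriv pos(5) by (intro exI conjI) (assumption, simp)
  qed
  show "\<exists>y. (sinc_cos_diff a (1 - 1 / m) has_real_derivative y) (at t) \<and> y < 0"
    if "(sin t * t\<^sup>2) ^ m * (sin t / t) < a ^ m * (sin t - t * cos t) ^ m * cos t"
  proof -
    have "X ^ m * (sin t / t) < Y ^ m * cos t"
      using that unfolding P Q cancel .
    then have "0 < (sin t / t) powr (- 1 / m) * Y - cos t powr (- 1 / m) * X"
      using powr_neg_root_diff_pos_iff[of "sin t / t" "cos t" Y X m] pos assms by simp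
    then show ?thesis
      using deriv pos(5) by (intro exI conjI) (assumption, simp add: mult_pos_neg)
  qed
qed

lemma sinc_cos_diff_tendsto: "(sinc_cos_diff a r \<longlongrightarrow> a - 1) (at_right 0)"
proof -
  have "((\<lambda>t::real. cos t) \<longlongrightarrow> 1) (at_right 0)"
    using tendsto_cos[OF tendsto_ident_at[of 0 "{0<..}"]] by simp
  then have "((\<lambda>t. a * (sin t / t) powr r - cos t powr r) \<longlongrightarrow> a * 1 powr r - 1 powr r) (at_right 0)"
    by (intro tendsto_intros sinc_tendsto_one) auto
  then show ?thesis
    by (simp add: sinc_cos_diff_def [abs_def])
qed

lemma lower_key_ineq:
  assumes "0 < x" "x < pi/2"
  shows "3 ^ 5 * (sin x - x * cos x) ^ 5 * cos x < (sin x * x\<^sup>2) ^ 5 * (sin x / x)"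
proof -
  define y where "y = x\<^sup>2"
  have "x\<^sup>2 \<le> (11/7)\<^sup>2"
    using assms pi_bounds by (intro power_mono) auto
  then have y: "0 < y" "y \<le> 121/49" using assms by (auto simp: y_def power_divide)
  define S where "S = ipoly [5040, -840, 42, -1] y"
  define C where "C = ipoly [40320, -20160, 1680, -56, 1] y"
  define H where "H = ipoly [280, -28, 1] y"
  define D where "D = sin x - x * cos x"
  have "0 < S" "0 < D" "0 < cos x"
    using ipoly_sin_taylor_7_pos[OF y] x_cos_less_sin[of x] sin_cos_pos[OF assms] assms
    by (auto simp: S_def D_def)
  have D: "D \<le> x ^ 3 * H / 840" and C: "cos x \<le> C / 40320" and S: "x * S / 5040 \<le> sin x"
    using sin_minus_x_cos_le_taylor_7 cos_le_taylor_8 sin_ge_taylor_7 assms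
    by (auto simp: D_def H_def C_def S_def y_def)
  have "3 ^ 5 * D ^ 5 * cos x \<le> 3 ^ 5 * (x ^ 3 * H / 840) ^ 5 * (C / 40320)"
    using \<open>0 < D\<close> \<open>0 < cos x\<close> D C by (intro mult_mono power_mono) auto
  also have "\<dots> = x ^ 15 * (243 * (C * H ^ 5) / (840 ^ 5 * 40320))"
    by (simp add: power_mult_distrib power_divide field_simps flip: power_mult)
  also have "\<dots> < x ^ 15 * (S ^ 6 / 5040 ^ 6)"
    using lower_key_ipoly_ineq[OF y] assms by (intro mult_strict_left_mono) (auto simp: S_def C_def H_def)
  also have "\<dots> = (x * S / 5040) ^ 6 * x ^ 9"
    by (simp add: power_mult_distrib power_divide field_simps flip: power_add)
  also have "\<dots> \<le> sin x ^ 6 * x ^ 9"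
    using \<open>0 < S\<close> assms S by (intro mult_right_mono power_mono) auto
  also have "\<dots> = (sin x * x\<^sup>2) ^ 5 * (sin x / x)"
    using assms by (simp add: power_mult_distrib field_simps flip: power_mult power_add) algebra
  finally show ?thesis by (simp add: D_def)
qed

lemma sinc_cos_diff_lower:
  assumes "0 < x" "x < pi/2"
  shows "2 < sinc_cos_diff 3 (4/5) x"
proof -
  have "3 - 1 < sinc_cos_diff 3 (1 - 1 / real (5::nat)) x"
  proof (rule less_tendsto_at_right_if_deriv_pos[OF sinc_cos_diff_tendsto assms(1)])
    fix t assume "0 < t" "t \<le> x"
    then show "\<exists>y. (sinc_cos_diff 3 (1 - 1 / real (5::nat)) has_real_derivative y) (at t) \<and> 0 < y"
      using assms lower_key_ineq[of t] by (intro sinc_cos_diff_deriv_sign(1)) auto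
  qed
  then show ?thesis by simp
qed

lemma upper_small_key_ineq:
  fixes x :: real
  assumes "0 < x" "x \<le> 133/100"
  shows "(sin x * x\<^sup>2) ^ 9 * (sin x / x) < 3 ^ 9 * (sin x - x * cos x) ^ 9 * cos x"
proof -
  define y where "y = x\<^sup>2"
  have "x\<^sup>2 \<le> (133/100)\<^sup>2"
    using assms by (intro power_mono) auto
  then have y: "0 < y" "y \<le> 17689/10000" using assms by (auto simp: y_def power_divide)
  define S where "S = ipoly [120, -20, 1] y"
  define C where "C = ipoly [720, -360, 30, -1] y"
  define L where "L = ipoly [15120, -1512, 54, -1] y"
  define D where "D = sin x - x * cos x"
  have "0 < C" "0 < L" "0 < sin x" "0 < D"
    using ipoly_cos_taylor_6_pos[OF y] ipoly_sin_minus_x_cos_taylor_9_pos[of y] y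
      sin_cos_pos[of x] x_cos_less_sin[of x] assms pi_bounds
    by (auto simp: C_def L_def D_def)
  have D: "x ^ 3 * L / 45360 \<le> D" and C: "C / 720 \<le> cos x" and S: "sin x \<le> x * S / 120"
    using sin_minus_x_cos_ge_taylor_9 cos_ge_taylor_6 sin_le_taylor_5 assms
    by (auto simp: D_def L_def C_def S_def y_def)
  have "(sin x * x\<^sup>2) ^ 9 * (sin x / x) = sin x ^ 10 * x ^ 17"
    using assms by (simp add: power_mult_distrib field_simps flip: power_mult power_add) algebra
  also have "\<dots> \<le> (x * S / 120) ^ 10 * x ^ 17"
    using \<open>0 < sin x\<close> S assms by (intro mult_right_mono power_mono) auto
  also have "\<dots> = x ^ 27 * (S ^ 10 / 120 ^ 10)"
    by (simp add: power_mult_distrib power_divide field_simps flip: power_add)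
  also have "\<dots> < x ^ 27 * (3 ^ 9 * (C * L ^ 9) / (720 * 45360 ^ 9))"
    using upper_small_key_ipoly_ineq[OF y] assms
    by (intro mult_strict_left_mono) (auto simp: S_def C_def L_def field_simps)
  also have "\<dots> = 3 ^ 9 * (x ^ 3 * L / 45360) ^ 9 * (C / 720)"
    by (simp add: power_mult_distrib power_divide field_simps flip: power_mult)
  also have "\<dots> \<le> 3 ^ 9 * D ^ 9 * cos x"
    using \<open>0 < C\<close> \<open>0 < L\<close> \<open>0 < D\<close> assms D C
    by (intro mult_mono power_mono mult_left_mono) auto
  finally show ?thesis by (simp add: D_def)
qed

lemma sinc_cos_diff_upper_small:
  fixes x :: real
  assumes "0 < x" "x \<le> 133/100"
  shows "sinc_cos_diff 3 (8/9) x < 2"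
proof -
  have "- (3 - 1) < - sinc_cos_diff 3 (1 - 1 / real (9::nat)) x"
  proof (rule less_tendsto_at_right_if_deriv_pos[OF tendsto_minus[OF sinc_cos_diff_tendsto] assms(1)])
    fix t assume "0 < t" "t \<le> x"
    then have "\<exists>y. (sinc_cos_diff 3 (1 - 1 / real (9::nat)) has_real_derivative y) (at t) \<and> y < 0"
      using assms pi_bounds upper_small_key_ineq[of t] by (intro sinc_cos_diff_deriv_sign(2)) auto
    then show "\<exists>y. ((\<lambda>t. - sinc_cos_diff 3 (1 - 1 / real (9::nat)) t) has_real_derivative y) (at t) \<and> 0 < y"
      by (auto intro: DERIV_minus)
  qed
  then show ?thesis by simp
qed

lemma successively_cover:
  fixes lo hi :: "'p \<Rightarrow> real"
  assumes "ps \<noteq> []" "successively (\<lambda>p q. lo q \<le> hi p) ps" "lo (hd ps) \<le> x" "x \<le> hi (last ps)"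
  obtains p where "p \<in> set ps" "lo p \<le> x" "x \<le> hi p"
  using assms
proof (induction ps rule: induct_list012)
  case (3 p q ps)
  show ?case
  proof (cases "x \<le> hi p")
    case True
    then show ?thesis using "3.prems" by auto
  next
    case False
    then have "lo q \<le> x" using "3.prems"(3) by simp
    then show ?thesis using "3.IH"(2) "3.prems" by auto
  qed
qed auto

lemma sinc_cos_diff_upper_piece:
  fixes a b x S C A B :: real
  assumes "0 < a" "a \<le> x" "x \<le> b" "b \<le> 3/2"
    and "sin_taylor 5 a \<le> S * a" "0 < C" "C \<le> cos_taylor 6 b"
    and "S ^ 8 \<le> A ^ 9" "0 \<le> A" "B ^ 9 \<le> C ^ 8" "0 \<le> B" "3 * A < 2 + B"
  shows "sinc_cos_diff 3 (8/9) x < 2"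
proof -
  have x: "0 < x" "x < pi/2" "x < pi" using assms pi_bounds by auto
  have "sin a \<le> S * a"
    using sin_cos_taylor_alternating(1)[of a 5] assms by simp
  then have "sin a / a \<le> S"
    using assms(1) by (simp add: divide_le_eq)
  then have "sin x / x \<le> S"
    by (rule order_trans[OF sinc_antimono[OF assms(1,2) x(3)]])
  moreover have "C \<le> cos x"
    using sin_cos_taylor_alternating(2)[of b 6] assms pi_bounds
      cos_monotone_0_pi_le[of x b] by simp
  moreover have "0 < sin x / x" using sin_cos_pos[OF x(1,2)] by simp
  ultimately have "(sin x / x) powr (8/9) \<le> S powr (8/9)" "C powr (8/9) \<le> cos x powr (8/9)"
    using assms by (auto intro: powr_mono2)
  moreover have "S powr (8/9) \<le> A"
  proof -
    have "(S powr (8/9)) ^ 9 = S ^ 8"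
      using \<open>0 < sin x / x\<close> \<open>sin x / x \<le> S\<close> by (simp add: powr_power)
    then show ?thesis using assms power_mono_iff[of "S powr (8/9)" A 9] by simp
  qed
  moreover have "B \<le> C powr (8/9)"
  proof -
    have "(C powr (8/9)) ^ 9 = C ^ 8"
      using assms by (simp add: powr_power)
    then show ?thesis using assms power_mono_iff[of B "C powr (8/9)" 9] by simp
  qed
  ultimately show ?thesis
    using assms by (simp add: sinc_cos_diff_def)
qed

text \<open>\<open>sinc_cos_diff 3 (8/9)\<close> is not monotone on \<open>(0, pi/2)\<close> (it exceeds 2 near \<open>pi/2\<close>), so on
  this range \<open>sin x / x\<close> and \<open>cos x\<close> are bounded by their values at the ends of short intervals,
  with rational bounds \<open>A\<close>, \<open>B\<close> for the \<open>8/9\<close>-th powers.\<close>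

lemma sinc_cos_diff_upper_mid:
  fixes x :: real
  assumes "133/100 \<le> x" "x \<le> 144/100"
  shows "sinc_cos_diff 3 (8/9) x < 2"
proof -
  define ps :: "(real \<times> real \<times> real \<times> real \<times> real \<times> real) list" where "ps =
    [(133/100, 67/50, 73019/100000, 183/800, 2363/3125, 26949/100000),
     (67/50, 27/20, 72649/100000, 219/1000, 3011/4000, 1037/4000),
     (27/20, 34/25, 18069/25000, 20923/100000, 74931/100000, 12447/50000),
     (34/25, 137/100, 35951/50000, 2493/12500, 74587/100000, 1491/6250),
     (137/100, 69/50, 71527/100000, 4741/25000, 74241/100000, 22811/100000),
     (69/50, 139/100, 71149/100000, 17981/100000, 18473/25000, 21757/100000),
     (139/100, 7/5, 7077/10000, 4249/25000, 36771/50000, 10347/50000),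
     (7/5, 141/100, 7039/10000, 1601/10000, 73191/100000, 2453/12500),
     (141/100, 71/50, 8751/12500, 7511/50000, 36419/50000, 18543/100000),
     (71/50, 143/100, 8703/12500, 14033/100000, 72483/100000, 8727/50000),
     (143/100, 1439/1000, 69239/100000, 13141/100000, 36063/50000, 1029/6250),
     (1439/1000, 36/25, 68891/100000, 6521/50000, 17951/25000, 8177/50000)]"
  have pieces: "\<forall>(a, b, S, C, A, B) \<in> set ps. 0 < a \<and> a \<le> b \<and> b \<le> 3/2 \<and>
      sin_taylor 5 a \<le> S * a \<and> 0 < C \<and> C \<le> cos_taylor 6 b \<and>
      S ^ 8 \<le> A ^ 9 \<and> 0 \<le> A \<and> B ^ 9 \<le> C ^ 8 \<and> 0 \<le> B \<and> 3 * A < 2 + B"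
    unfolding ps_def by (simp add: sin_taylor_def cos_taylor_def eval_nat_numeral power_divide)
  obtain p where p: "p \<in> set ps" "fst p \<le> x" "x \<le> fst (snd p)"
    by (rule successively_cover[of ps fst "\<lambda>p. fst (snd p)" x]) (use assms in \<open>simp_all add: ps_def\<close>)
  obtain a b S C A B where "p = (a, b, S, C, A, B)"
    by (cases p) auto
  with p bspec[OF pieces p(1)] show ?thesis
    by (auto intro!: sinc_cos_diff_upper_piece[of a x b S C A B])
qed

lemma upper_large_key_ineq:
  assumes "144/100 \<le> x" "x < pi/2"
  shows "60000 * (sin x - x * cos x) ^ 10 * cos x < (sin x * x\<^sup>2) ^ 10 * (sin x / x)"
proof -
  have "0 < x" using assms by simp
  define y where "y = x\<^sup>2"
  have "(144/100)\<^sup>2 \<le> x\<^sup>2" "x\<^sup>2 \<le> (11/7)\<^sup>2"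
    using assms pi_bounds by (intro power_mono; simp)+
  then have y: "10143/4900 < y" "y \<le> 121/49" by (auto simp: y_def power_divide)
  define S where "S = ipoly [5040, -840, 42, -1] y"
  define C where "C = ipoly [40320, -20160, 1680, -56, 1] y"
  define H where "H = ipoly [280, -28, 1] y"
  define D where "D = sin x - x * cos x"
  have "0 < S" "0 < D" "0 < cos x"
    using ipoly_sin_taylor_7_pos[of y] y x_cos_less_sin[of x] sin_cos_pos[OF \<open>0 < x\<close> assms(2)] assms
    by (auto simp: S_def D_def)
  have D: "D \<le> x ^ 3 * H / 840" and C: "cos x \<le> C / 40320" and S: "x * S / 5040 \<le> sin x"
    using sin_minus_x_cos_le_taylor_7 cos_le_taylor_8 sin_ge_taylor_7 \<open>0 < x\<close>
    by (auto simp: D_def H_def C_def S_def y_def)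
  have "60000 * D ^ 10 * cos x \<le> 60000 * (x ^ 3 * H / 840) ^ 10 * (C / 40320)"
    using \<open>0 < D\<close> \<open>0 < cos x\<close> D C by (intro mult_mono power_mono mult_left_mono) auto
  also have "\<dots> = x ^ 30 * (60000 * (C * H ^ 10) / (840 ^ 10 * 40320))"
    by (simp add: power_mult_distrib power_divide field_simps flip: power_mult)
  also have "\<dots> < x ^ 30 * (S ^ 11 / 5040 ^ 11)"
    using upper_large_key_ipoly_ineq[OF y] \<open>0 < x\<close>
    by (intro mult_strict_left_mono) (auto simp: S_def C_def H_def field_simps)
  also have "\<dots> = (x * S / 5040) ^ 11 * x ^ 19"
    by (simp add: power_mult_distrib power_divide field_simps flip: power_add)
  also have "\<dots> \<le> sin x ^ 11 * x ^ 19"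
    using \<open>0 < S\<close> \<open>0 < x\<close> S by (intro mult_right_mono power_mono) auto
  also have "\<dots> = (sin x * x\<^sup>2) ^ 10 * (sin x / x)"
    using \<open>0 < x\<close> by (simp add: power_mult_distrib field_simps flip: power_mult power_add) algebra
  finally show ?thesis by (simp add: D_def)
qed

text \<open>The factor \<open>2 (pi/2) powr (9/10)\<close> makes the value at \<open>pi/2\<close> exactly 2.\<close>

lemma sinc_cos_diff_upper_large:
  assumes "144/100 \<le> x" "x < pi/2"
  shows "sinc_cos_diff (2 * (pi/2) powr (9/10)) (9/10) x < 2"
proof -
  define a where "a = 2 * (pi/2) powr (9/10)"
  have "0 < a" by (simp add: a_def)
  have "a ^ 10 = 2 ^ 10 * (pi/2) ^ 9"
    by (simp add: a_def power_mult_distrib powr_power)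
  also have "\<dots> \<le> 2 ^ 10 * (11/7) ^ 9"
    using pi_bounds by (intro mult_left_mono power_mono) auto
  finally have "a ^ 10 \<le> 60000" by (simp add: power_divide)
  have "sinc_cos_diff a (9/10) x < sinc_cos_diff a (9/10) (pi/2)"
  proof (rule DERIV_pos_imp_increasing_open[OF assms(2)])
    fix t assume t: "x < t" "t < pi/2"
    then have "a ^ 10 * (sin t - t * cos t) ^ 10 * cos t \<le> 60000 * (sin t - t * cos t) ^ 10 * cos t"
      using \<open>a ^ 10 \<le> 60000\<close> sin_cos_pos[of t] assms by (intro mult_right_mono) auto
    also have "\<dots> < (sin t * t\<^sup>2) ^ 10 * (sin t / t)"
      using t assms by (intro upper_large_key_ineq) auto
    finally have "\<exists>y. (sinc_cos_diff a (1 - 1 / real (10::nat)) has_real_derivative y) (at t) \<and> 0 < y"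
      using t assms \<open>0 < a\<close> by (intro sinc_cos_diff_deriv_sign(1)) auto
    then show "\<exists>y. (sinc_cos_diff a (9/10) has_real_derivative y) (at t) \<and> 0 < y"
      by simp
  next
    have "continuous_on {x..pi/2} (\<lambda>t. sin t / t)"
      using assms by (intro continuous_intros) auto
    then have "continuous_on {x..pi/2} (\<lambda>t. (sin t / t) powr (9/10))"
      by (rule continuous_on_powr'[OF _ continuous_on_const])
        (use assms in \<open>auto intro!: divide_nonneg_nonneg sin_ge_zero\<close>)
    moreover have "continuous_on {x..pi/2} (\<lambda>t. cos t powr (9/10))"
      by (rule continuous_on_powr'[OF continuous_on_cos[OF continuous_on_id] continuous_on_const])
        (use assms in \<open>auto intro!: cos_ge_zero\<close>)
    ultimately show "continuous_on {x..pi/2} (sinc_cos_diff a (9/10))"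
      unfolding sinc_cos_diff_def [abs_def]
      by (intro continuous_on_diff continuous_on_mult continuous_on_const)
  qed
  also have "sinc_cos_diff a (9/10) (pi/2) = 2"
    by (simp add: sinc_cos_diff_def a_def powr_divide)
  finally show ?thesis by (simp add: a_def)
qed

lemma powr_less_iff_less_powr_inverse:
  fixes x y r :: real
  assumes "0 < r" "0 \<le> x" "0 \<le> y"
  shows "x powr r < y \<longleftrightarrow> x < y powr (1 / r)"
proof
  assume "x powr r < y"
  then have "(x powr r) powr (1 / r) < y powr (1 / r)"
    using assms by (intro powr_less_mono2) auto
  then show "x < y powr (1 / r)"
    using assms by (simp add: powr_powr)
next
  assume "x < y powr (1 / r)"
  then have "x powr r < (y powr (1 / r)) powr r"
    using assms by (intro powr_less_mono2) auto
  then show "x powr r < y"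
    using assms by (simp add: powr_powr)
qed

lemma powr_greater_iff_greater_powr_inverse:
  fixes x y r :: real
  assumes "0 < r" "0 \<le> x" "0 \<le> y"
  shows "y < x powr r \<longleftrightarrow> y powr (1 / r) < x"
proof
  assume "y < x powr r"
  then have "y powr (1 / r) < (x powr r) powr (1 / r)"
    using assms by (intro powr_less_mono2) auto
  then show "y powr (1 / r) < x"
    using assms by (simp add: powr_powr)
next
  assume "y powr (1 / r) < x"
  then have "(y powr (1 / r)) powr r < x powr r"
    using assms by (intro powr_less_mono2) auto
  then show "y < x powr r"
    using assms by (simp add: powr_powr)
qed

lemma power_mean_less_iff:
  assumes "0 < r" "0 < a" "0 < b" "0 \<le> w" "w \<le> 1" "0 \<le> s"
  shows "power_mean r a b w < s \<longleftrightarrow> w * a powr r + (1 - w) * b powr r < s powr r"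
  using powr_less_iff_less_powr_inverse[of "1 / r" "w * a powr r + (1 - w) * b powr r" s]
    weighted_powr_sum_pos[of a b w r] assms
  by (simp add: power_mean_nonzero)

lemma less_power_mean_iff:
  assumes "0 < r" "0 < a" "0 < b" "0 \<le> w" "w \<le> 1" "0 \<le> s"
  shows "s < power_mean r a b w \<longleftrightarrow> s powr r < w * a powr r + (1 - w) * b powr r"
  using powr_greater_iff_greater_powr_inverse[of "1 / r" "w * a powr r + (1 - w) * b powr r" s]
    weighted_powr_sum_pos[of a b w r] assms
  by (simp add: power_mean_nonzero)

lemma power_mean_four_fifths_less_sinc:
  assumes "0 < x" "x < pi/2"
  shows "power_mean (4/5) 1 (cos x) (2/3) < sin x / x"
  using power_mean_less_iff[of "4/5" 1 "cos x" "2/3" "sin x / x"] sinc_cos_diff_lower[OF assms]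
    sin_cos_pos[OF assms]
  by (simp add: sinc_cos_diff_def)

text \<open>The exponent \<open>p\<close> with \<open>(2/3) powr (1/p) = 2/pi\<close>, i.e. with
  \<open>power_mean p 1 (cos (pi/2)) (2/3) = sin (pi/2) / (pi/2)\<close>.\<close>

definition upper_exponent :: real where
  "upper_exponent = (ln 3 - ln 2) / (ln pi - ln 2)"

lemma upper_exponent_bounds: "8/9 \<le> upper_exponent" "upper_exponent \<le> 9/10"
proof -
  have "0 < ln pi - ln 2" using pi_bounds by simp
  have "(pi/2) ^ 8 \<le> (11/7) ^ 8"
    using pi_bounds by (intro power_mono) auto
  also have "\<dots> \<le> (3/2) ^ 9" by (simp add: power_divide)
  finally have "8 * (ln pi - ln 2) \<le> 9 * (ln 3 - ln 2)"
    using ln_le_cancel_iff[of "(pi/2) ^ 8" "(3/2) ^ 9"] by (simp add: ln_realpow ln_div)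
  then show "8/9 \<le> upper_exponent"
    using \<open>0 < ln pi - ln 2\<close> by (simp add: upper_exponent_def le_divide_eq)
  have "(3/2) ^ 10 \<le> (157/100 :: real) ^ 9" by (simp add: power_divide)
  also have "\<dots> \<le> (pi/2) ^ 9"
    using pi_bounds by (intro power_mono) auto
  finally have "10 * (ln 3 - ln 2) \<le> 9 * (ln pi - ln 2)"
    using ln_le_cancel_iff[of "(3/2) ^ 10" "(pi/2) ^ 9"] by (simp add: ln_realpow ln_div)
  then show "upper_exponent \<le> 9/10"
    using \<open>0 < ln pi - ln 2\<close> by (simp add: upper_exponent_def divide_le_eq)
qed

lemma two_thirds_powr_inverse_upper_exponent: "(2/3) powr (1 / upper_exponent) = 2/pi"
proof -
  have "0 < ln 3 - ln (2::real)" by simp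
  then have "1 / upper_exponent * ln (2/3) = ln 2 - ln pi"
    by (simp add: upper_exponent_def ln_div field_simps)
  then show ?thesis
    by (simp add: powr_def exp_diff)
qed

lemma sinc_less_power_mean_upper_exponent_large:
  assumes "144/100 \<le> x" "x < pi/2"
  shows "sin x / x < power_mean upper_exponent 1 (cos x) (2/3)"
proof -
  let ?p = upper_exponent
  have x: "0 < x" "x < pi/2" using assms by auto
  have c: "0 < cos x" "cos x \<le> 1" and s: "0 < sin x / x"
    using sin_cos_pos[OF x] by auto
  have p: "8/9 \<le> ?p" "?p \<le> 9/10" by (fact upper_exponent_bounds)+
  have "(pi/2 * (sin x / x)) powr (9/10) = (pi/2) powr (9/10) * (sin x / x) powr (9/10)"
    by (rule powr_mult)
  also have "\<dots> < 1 + cos x powr (9/10) / 2"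
    using sinc_cos_diff_upper_large[OF assms] by (simp add: sinc_cos_diff_def)
  finally have "(pi/2 * (sin x / x)) powr (9/10) < 1 + cos x powr (9/10) / 2" .
  moreover have "0 \<le> pi/2 * (sin x / x)"
    using s by (intro mult_nonneg_nonneg) auto
  ultimately have "pi/2 * (sin x / x) < (1 + cos x powr (9/10) / 2) powr (10/9)"
    using powr_less_iff_less_powr_inverse[of "9/10" "pi/2 * (sin x / x)"] by simp
  also have "\<dots> \<le> (1 + cos x powr ?p / 2) powr (10/9)"
    using c p by (intro powr_mono2 add_left_mono divide_right_mono powr_mono') auto
  also have "\<dots> \<le> (1 + cos x powr ?p / 2) powr (1 / ?p)"
    using p by (intro powr_mono) (auto simp: field_simps)
  also have "\<dots> = pi/2 * ((2/3) powr (1 / ?p) * (1 + cos x powr ?p / 2) powr (1 / ?p))"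
    by (simp add: two_thirds_powr_inverse_upper_exponent)
  also have "\<dots> = pi/2 * power_mean ?p 1 (cos x) (2/3)"
    using p by (simp add: power_mean_nonzero add_divide_distrib flip: powr_mult)
  finally show ?thesis
    by (rule mult_left_less_imp_less) simp
qed

lemma sinc_less_power_mean_upper_exponent:
  assumes "0 < x" "x < pi/2"
  shows "sin x / x < power_mean upper_exponent 1 (cos x) (2/3)"
proof (cases "x \<le> 144/100")
  case True
  then have "sinc_cos_diff 3 (8/9) x < 2"
    using sinc_cos_diff_upper_small[of x] sinc_cos_diff_upper_mid[of x] assms by fastforce
  then have "sin x / x < power_mean (8/9) 1 (cos x) (2/3)"
    using less_power_mean_iff[of "8/9" 1 "cos x" "2/3" "sin x / x"] sin_cos_pos[OF assms]
    by (simp add: sinc_cos_diff_def)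
  also have "\<dots> \<le> power_mean upper_exponent 1 (cos x) (2/3)"
    using upper_exponent_bounds sin_cos_pos[OF assms] by (intro power_mean_mono) auto
  finally show ?thesis .
qed (use sinc_less_power_mean_upper_exponent_large assms in simp)

lemma le_four_fifths_if_power_mean_less_sinc:
  assumes "\<forall>x\<in>{0<..<pi/2}. power_mean r 1 (cos x) (2/3) < sin x / x"
  shows "r \<le> 4/5"
proof (rule ccontr)
  assume "\<not> r \<le> 4/5"
  then have "0 < r" "4/5 < r" by auto
  have "((\<lambda>x. ((2/3 + cos x powr r / 3) powr (1 / r) - sin x / x) / x ^ 4) \<longlongrightarrow> (r - 4/5) / 36)
      (at_right 0)"
    using \<open>0 < r\<close> by (real_asymp simp: field_simps)
  then have "eventually (\<lambda>x. 0 < ((2/3 + cos x powr r / 3) powr (1 / r) - sin x / x) / x ^ 4)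
      (at_right 0)"
    using \<open>4/5 < r\<close> by (intro order_tendstoD(1)) auto
  moreover have "eventually (\<lambda>x. x \<in> {0<..<pi/2}) (at_right (0::real))"
    by (intro eventually_at_right_real) simp_all
  ultimately have "eventually (\<lambda>x. sin x / x < power_mean r 1 (cos x) (2/3) \<and>
      power_mean r 1 (cos x) (2/3) < sin x / x) (at_right 0)"
    by eventually_elim (use assms \<open>0 < r\<close> in \<open>auto simp: power_mean_nonzero zero_less_divide_iff\<close>)
  then show False
    by (auto dest: eventually_happens)
qed

lemma upper_exponent_le_if_sinc_less_power_mean:
  assumes "\<forall>x\<in>{0<..<pi/2}. sin x / x < power_mean r 1 (cos x) (2/3)"
  shows "upper_exponent \<le> r"
proof (rule ccontr)
  let ?p = upper_exponent
  assume "\<not> ?p \<le> r"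
  define q where "q = max r (?p / 2)"
  have "0 < ?p" using upper_exponent_bounds by simp
  then have q: "0 < q" "q < ?p" "r \<le> q"
    using \<open>\<not> ?p \<le> r\<close> by (auto simp: q_def)
  have less: "sin x / x < (2/3 + cos x powr q / 3) powr (1 / q)" if "0 < x" "x < pi/2" for x
  proof -
    have "sin x / x < power_mean r 1 (cos x) (2/3)" using assms that by simp
    also have "\<dots> \<le> power_mean q 1 (cos x) (2/3)"
      using q sin_cos_pos[OF that] by (intro power_mean_mono) auto
    finally show ?thesis using q by (simp add: power_mean_nonzero)
  qed
  define F where "F = at_left (pi/2 :: real)"
  have F: "F \<noteq> bot" "eventually (\<lambda>x. 0 < x \<and> x < pi/2) F"
    unfolding F_def eventually_at_left_field by (auto intro!: exI[of _ 0])
  have "((\<lambda>x. cos x powr q) \<longlongrightarrow> 0) F"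
  proof (rule tendsto_zero_powrI)
    show "((\<lambda>x. cos x) \<longlongrightarrow> 0) F"
      using tendsto_cos[of "\<lambda>x. x" "pi/2" F] by (simp add: F_def tendsto_ident_at)
    show "eventually (\<lambda>x. 0 \<le> cos x) F"
      using F(2) by eventually_elim (auto intro: cos_ge_zero)
  qed (use q in auto)
  then have "((\<lambda>x. (2/3 + cos x powr q / 3) powr (1 / q)) \<longlongrightarrow> (2/3 + 0 / 3) powr (1 / q)) F"
    by (intro tendsto_intros) auto
  moreover have "((\<lambda>x. sin x / x) \<longlongrightarrow> sin (pi/2) / (pi/2)) F"
    unfolding F_def by (intro tendsto_intros) auto
  moreover have "eventually (\<lambda>x. sin x / x \<le> (2/3 + cos x powr q / 3) powr (1 / q)) F"
    using F(2) by eventually_elim (auto intro!: less_imp_le less)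
  ultimately have "2/pi \<le> (2/3) powr (1 / q)"
    using tendsto_le[OF F(1)] by fastforce
  also have "\<dots> < (2/3) powr (1 / ?p)"
    using q by (intro powr_less_mono') (auto simp: divide_strict_left_mono)
  finally show False
    by (simp add: two_thirds_powr_inverse_upper_exponent)
qed

theorem corollary4p2:
  fixes \<alpha> \<beta> :: real
  shows "(\<forall>x\<in>{0<..<pi/2}.
            power_mean \<alpha> 1 (cos x) (2/3) < sin x / x \<and>
            sin x / x < power_mean \<beta> 1 (cos x) (2/3))
         \<longleftrightarrow> (\<alpha> \<le> 4/5 \<and> \<beta> \<ge> (ln 3 - ln 2) / (ln pi - ln 2))"
proof
  assume H: "\<forall>x\<in>{0<..<pi/2}. power_mean \<alpha> 1 (cos x) (2/3) < sin x / x \<and>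
    sin x / x < power_mean \<beta> 1 (cos x) (2/3)"
  have "\<alpha> \<le> 4/5"
    by (rule le_four_fifths_if_power_mean_less_sinc) (use H in auto)
  moreover have "upper_exponent \<le> \<beta>"
    by (rule upper_exponent_le_if_sinc_less_power_mean) (use H in auto)
  ultimately show "\<alpha> \<le> 4/5 \<and> \<beta> \<ge> (ln 3 - ln 2) / (ln pi - ln 2)"
    by (simp add: upper_exponent_def)
next
  assume "\<alpha> \<le> 4/5 \<and> \<beta> \<ge> (ln 3 - ln 2) / (ln pi - ln 2)"
  then have exps: "\<alpha> \<le> 4/5" "upper_exponent \<le> \<beta>"
    by (simp_all add: upper_exponent_def)
  show "\<forall>x\<in>{0<..<pi/2}. power_mean \<alpha> 1 (cos x) (2/3) < sin x / x \<and>
    sin x / x < power_mean \<beta> 1 (cos x) (2/3)"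
  proof
    fix x :: real assume "x \<in> {0<..<pi/2}"
    then have x: "0 < x" "x < pi/2" by auto
    have "power_mean \<alpha> 1 (cos x) (2/3) \<le> power_mean (4/5) 1 (cos x) (2/3)"
      using exps sin_cos_pos[OF x] by (intro power_mean_mono) auto
    also have "\<dots> < sin x / x"
      by (rule power_mean_four_fifths_less_sinc[OF x])
    finally have "power_mean \<alpha> 1 (cos x) (2/3) < sin x / x" .
    moreover have "sin x / x < power_mean upper_exponent 1 (cos x) (2/3)"
      by (rule sinc_less_power_mean_upper_exponent[OF x])
    moreover have "\<dots> \<le> power_mean \<beta> 1 (cos x) (2/3)"
      using exps sin_cos_pos[OF x] by (intro power_mean_mono) auto
    ultimately show "power_mean \<alpha> 1 (cos x) (2/3) < sin x / x \<and>
      sin x / x < power_mean \<beta> 1 (cos x) (2/3)"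
      by linarith
  qed
qed

end
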